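(* Let $X,Y,P$ be Banach spaces, $H:X\times P\rightrightarrows Y$ a set-valued map and $(\overline{x},\overline{p},0)\in\operatorname{Gr}H$. Define $S:P\rightrightarrows X$ by $S(p)=\{x\in X: 0\in H(x,p)\}$, and suppose $H$ is inner semicontinuous at $((\overline{x},\overline{p}),0)$. (i) If $H$ is open with linear rate $c>0$ with respect to $x$ uniformly in $p$ around $((\overline{x},\overline{p}),0)$, then there exist $\overline{r},\overline{t}>0$ such that for every $(x,p)\in B(\overline{x},\overline{r})\times B(\overline{p},\overline{t})$, \[ d(x,S(p))\le c^{-1}d(0,H(x,p)). \] If moreover $H$ is Lipschitz-like with respect to $p$ uniformly in $x$ around $((\overline{x},\overline{p}),0)$, then $S$ is Lipschitz-like around $(\overline{p},\overline{x})$ and \[ \operatorname{lip}S(\overline{p},\overline{x})\le c^{-1}\,\widehat{\operatorname{lip}}_pH((\overline{x},\overline{p}),0). \] (ii) If $H$ is open with linear rate $c>0$ with respect to $p$ uniformly in $x$ around $((\overline{x},\overline{p}),0)$, then there exist $\overline{r},\overline{t}>0$ such that for every $(x,p)\in B(\overline{x},\overline{r})\times B(\overline{p},\overline{t})$, \[ d(p,S^{-1}(x))\le c^{-1}d(0,H(x,p)). \] If moreover $H$ is Lipschitz-like with respect to $x$ uniformly in $p$ around $((\overline{x},\overline{p}),0)$, then $S$ is metrically regular around $(\overline{p},\overline{x})$ and \[ \operatorname{reg}S(\overline{p},\overline{x})\le c^{-1}\,\widehat{\operatorname{lip}}_xH((\overline{x},\overline{p}),0). \]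
   Context: $B(x,r)$ open ball, $\mathbb{D}_Y$ closed unit ball of $Y$, $d(x,A)=\inf_{a\in A}\|x-a\|$ with $d(x,\emptyset)=\infty$. Product spaces carry the sum norm. $H$ is inner semicontinuous at $((\overline{x},\overline{p}),0)$ if for every open $D\ni 0$ there is a neighborhood $U$ of $(\overline{x},\overline{p})$ with $H(x,p)\cap D\neq\emptyset$ for all $(x,p)\in U$. Write $H_p=H(\cdot,p)$, $H_x=H(x,\cdot)$. $H$ is open with linear rate $c$ with respect to $x$ uniformly in $p$ around $((\overline{x},\overline{p}),\overline{y})$ if there exist $\varepsilon>0$ and neighborhoods $U$ of $\overline{x}$, $V$ of $\overline{p}$, $W$ of $\overline{y}$ such that for every $\rho\in]0,\varepsilon[$, $p\in V$ and $(x,y)\in\operatorname{Gr}H_p\cap(U\times W)$: $B(y,\rho c)\subset H_p(B(x,\rho))$. $H$ is Lipschitz-like with respect to $x$ uniformly in $p$ around $((\overline{x},\overline{p}),\overline{y})$ with constant $L$ if there are such neighborhoods with $H_p(x)\cap W\subset H_p(u)+L\|x-u\|\mathbb{D}_Y$ for all $x,u\in U$, $p\in V$; $\widehat{\operatorname{lip}}_xH((\overline{x},\overline{p}),\overline{y})$ is the infimum of such $L$. The notions "with respect to $p$ uniformly in $x$" (and $\widehat{\operatorname{lip}}_p$) are defined symmetrically, exchanging the roles of $x$ and $p$. A multifunction $T:A\rightrightarrows B$ is Lipschitz-like around $(\overline{a},\overline{b})\in\operatorname{Gr}T$ with constant $L$ if there are neighborhoods $U$ of $\overline{a}$, $V$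 of $\overline{b}$ with $T(a)\cap V\subset T(u)+L\|a-u\|\mathbb{D}_B$ for all $a,u\in U$; $\operatorname{lip}T(\overline{a},\overline{b})$ is the infimum of such $L$. $T$ is metrically regular around $(\overline{a},\overline{b})$ with constant $L$ if there are neighborhoods $U,V$ with $d(a,T^{-1}(b))\le L\,d(b,T(a))$ for all $(a,b)\in U\times V$; $\operatorname{reg}T(\overline{a},\overline{b})$ is the infimum of such $L$. *)

theory Defs
  imports "HOL-Analysis.Analysis"
begin

definition dist_to_set :: "'a::real_normed_vector \<Rightarrow> 'a set \<Rightarrow> ereal" where
  "dist_to_set x A = (if A = {} then \<infinity> else ereal (infdist x A))"

definition inner_semicontinuous ::
  "('x::real_normed_vector \<Rightarrow> 'p::real_normed_vector \<Rightarrow> 'y::real_normed_vector set)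
    \<Rightarrow> 'x \<Rightarrow> 'p \<Rightarrow> 'y \<Rightarrow> bool" where
  "inner_semicontinuous H xb pb yb \<longleftrightarrow>
     (\<forall>D. open D \<and> yb \<in> D \<longrightarrow>
        (\<exists>U. open U \<and> (xb, pb) \<in> U \<and> (\<forall>x p. (x, p) \<in> U \<longrightarrow> H x p \<inter> D \<noteq> {})))"

definition open_rate_x ::
  "('x::real_normed_vector \<Rightarrow> 'p::real_normed_vector \<Rightarrow> 'y::real_normed_vector set)
    \<Rightarrow> real \<Rightarrow> 'x \<Rightarrow> 'p \<Rightarrow> 'y \<Rightarrow> bool" where
  "open_rate_x H c xb pb yb \<longleftrightarrow>
     (\<exists>\<epsilon>>0. \<exists>U V W. open U \<and> xb \<in> U \<and> open V \<and> pb \<in> V \<and> open W \<and> yb \<in> W \<and>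
        (\<forall>\<rho> p x y. 0 < \<rho> \<and> \<rho> < \<epsilon> \<and> p \<in> V \<and> x \<in> U \<and> y \<in> W \<and> y \<in> H x p \<longrightarrow>
           ball y (\<rho> * c) \<subseteq> (\<Union>u\<in>ball x \<rho>. H u p)))"

definition open_rate_p ::
  "('x::real_normed_vector \<Rightarrow> 'p::real_normed_vector \<Rightarrow> 'y::real_normed_vector set)
    \<Rightarrow> real \<Rightarrow> 'x \<Rightarrow> 'p \<Rightarrow> 'y \<Rightarrow> bool" where
  "open_rate_p H c xb pb yb \<longleftrightarrow>
     (\<exists>\<epsilon>>0. \<exists>U V W. open U \<and> pb \<in> U \<and> open V \<and> xb \<in> V \<and> open W \<and> yb \<in> W \<and>
        (\<forall>\<rho> x p y. 0 < \<rho> \<and> \<rho> < \<epsilon> \<and> x \<in> V \<and> p \<in> U \<and> y \<in> W \<and> y \<in> H x p \<longrightarrow>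
           ball y (\<rho> * c) \<subseteq> (\<Union>q\<in>ball p \<rho>. H x q)))"

definition lipschitz_like_x_const ::
  "('x::real_normed_vector \<Rightarrow> 'p::real_normed_vector \<Rightarrow> 'y::real_normed_vector set)
    \<Rightarrow> real \<Rightarrow> 'x \<Rightarrow> 'p \<Rightarrow> 'y \<Rightarrow> bool" where
  "lipschitz_like_x_const H L xb pb yb \<longleftrightarrow> 0 \<le> L \<and>
     (\<exists>U V W. open U \<and> xb \<in> U \<and> open V \<and> pb \<in> V \<and> open W \<and> yb \<in> W \<and>
        (\<forall>x u p. x \<in> U \<and> u \<in> U \<and> p \<in> V \<longrightarrow>
           H x p \<inter> W \<subseteq> {z + b | z b. z \<in> H u p \<and> norm b \<le> L * norm (x - u)}))"

definition lipschitz_like_x where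
  "lipschitz_like_x H xb pb yb \<longleftrightarrow> (\<exists>L. lipschitz_like_x_const H L xb pb yb)"

definition lip_hat_x where
  "lip_hat_x H xb pb yb = Inf {ereal L | L. lipschitz_like_x_const H L xb pb yb}"

definition lipschitz_like_p_const ::
  "('x::real_normed_vector \<Rightarrow> 'p::real_normed_vector \<Rightarrow> 'y::real_normed_vector set)
    \<Rightarrow> real \<Rightarrow> 'x \<Rightarrow> 'p \<Rightarrow> 'y \<Rightarrow> bool" where
  "lipschitz_like_p_const H L xb pb yb \<longleftrightarrow> 0 \<le> L \<and>
     (\<exists>U V W. open U \<and> pb \<in> U \<and> open V \<and> xb \<in> V \<and> open W \<and> yb \<in> W \<and>
        (\<forall>p q x. p \<in> U \<and> q \<in> U \<and> x \<in> V \<longrightarrow>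
           H x p \<inter> W \<subseteq> {z + b | z b. z \<in> H x q \<and> norm b \<le> L * norm (p - q)}))"

definition lipschitz_like_p where
  "lipschitz_like_p H xb pb yb \<longleftrightarrow> (\<exists>L. lipschitz_like_p_const H L xb pb yb)"

definition lip_hat_p where
  "lip_hat_p H xb pb yb = Inf {ereal L | L. lipschitz_like_p_const H L xb pb yb}"

definition lipschitz_like_const ::
  "('a::real_normed_vector \<Rightarrow> 'b::real_normed_vector set) \<Rightarrow> real \<Rightarrow> 'a \<Rightarrow> 'b \<Rightarrow> bool" where
  "lipschitz_like_const T L ab bb \<longleftrightarrow> 0 \<le> L \<and>
     (\<exists>U V. open U \<and> ab \<in> U \<and> open V \<and> bb \<in> V \<and>
        (\<forall>a u. a \<in> U \<and> u \<in> U \<longrightarrow>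
           T a \<inter> V \<subseteq> {z + b | z b. z \<in> T u \<and> norm b \<le> L * norm (a - u)}))"

definition lipschitz_like where
  "lipschitz_like T ab bb \<longleftrightarrow> (\<exists>L. lipschitz_like_const T L ab bb)"

definition lip where
  "lip T ab bb = Inf {ereal L | L. lipschitz_like_const T L ab bb}"

definition metric_regular_const ::
  "('a::real_normed_vector \<Rightarrow> 'b::real_normed_vector set) \<Rightarrow> real \<Rightarrow> 'a \<Rightarrow> 'b \<Rightarrow> bool" where
  "metric_regular_const T L ab bb \<longleftrightarrow> 0 \<le> L \<and>
     (\<exists>U V. open U \<and> ab \<in> U \<and> open V \<and> bb \<in> V \<and>
        (\<forall>a b. a \<in> U \<and> b \<in> V \<longrightarrow> dist_to_set a {a'. b \<in> T a'} \<le> ereal L * dist_to_set b (T a)))"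

definition metric_regular where
  "metric_regular T ab bb \<longleftrightarrow> (\<exists>L. metric_regular_const T L ab bb)"

definition reg where
  "reg T ab bb = Inf {ereal L | L. metric_regular_const T L ab bb}"

end

theory Submission
  imports Defs
begin

text \<open>Take \<open>y \<in> H x p\<close> close to \<open>0\<close>. Openness in \<open>x\<close> with rate \<open>c\<close> moves \<open>y\<close> to \<open>0\<close> by moving \<open>x\<close>
  by little more than \<open>\<parallel>y\<parallel>/c\<close>, so \<open>d(x, S p) \<le> d(0, H x p)/c\<close>; inner semicontinuity guarantees
  that such small \<open>y\<close> exist near \<open>(xb, pb)\<close>. If \<open>x \<in> S p\<close>, Lipschitz-likeness in \<open>p\<close> gives
  \<open>d(0, H x q) \<le> L\<parallel>p - q\<parallel>\<close>, hence \<open>d(x, S q) \<le> (L/c)\<parallel>p - q\<parallel>\<close>: the Aubin property of \<open>S\<close>.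
  Part (ii) is part (i) with the roles of \<open>x\<close> and \<open>p\<close> exchanged, combined with
  Lipschitz-likeness in \<open>x\<close>, which bounds \<open>d(0, H x p)\<close> by \<open>L d(x, S p)\<close>.\<close>

lemma infdist_lessE:
  assumes "A \<noteq> {}" "infdist x A < a"
  obtains y where "y \<in> A" "dist x y < a"
proof -
  have "bdd_below (dist x ` A)"
    by (rule bdd_belowI[where m = 0]) auto
  then show ?thesis
    using assms that cINF_less_iff[of A "dist x" a] infdist_notempty[OF assms(1)] by auto
qed

lemma le_mult_infdist_if_le_nearby:
  fixes A :: "'a::metric_space set"
  assumes "A \<noteq> {}" "infdist x A < a" "0 < k"
    and nearby: "\<And>y. y \<in> A \<Longrightarrow> dist x y < a \<Longrightarrow> f \<le> k * dist x y"
  shows "f \<le> k * infdist x A"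
proof -
  have "f / k \<le> infdist x A"
  proof (rule dense_ge_bounded[OF assms(2)])
    fix w assume w: "infdist x A < w" "w < a"
    then obtain y where "y \<in> A" "dist x y < w"
      using infdist_lessE[OF assms(1)] by blast
    then have "f \<le> k * dist x y" "k * dist x y \<le> k * w"
      using nearby w \<open>0 < k\<close> by auto
    then have "f \<le> k * w"
      by linarith
    then show "f / k \<le> w"
      using \<open>0 < k\<close> by (simp add: divide_le_eq mult.commute)
  qed
  then show ?thesis
    using \<open>0 < k\<close> by (simp add: divide_le_eq mult.commute)
qed

lemma infdist_le_if_mem_enlargement:
  fixes y :: "'a::real_normed_vector"
  assumes "y \<in> A" "A \<subseteq> {z + b | z b. z \<in> B \<and> norm b \<le> k}"
  shows "B \<noteq> {} \<and> infdist y B \<le> k"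
proof -
  obtain z b where "y = z + b" "z \<in> B" "norm b \<le> k"
    using assms by blast
  then show ?thesis
    using infdist_le[of z B y] by (auto simp: dist_norm)
qed

lemma dist_to_set_le_ereal_mult:
  assumes "A \<noteq> {}" "0 < k" "B \<noteq> {} \<Longrightarrow> infdist x A \<le> k * infdist y B"
  shows "dist_to_set x A \<le> ereal k * dist_to_set y B"
  using assms by (simp add: dist_to_set_def)

lemma inner_semicontinuousD_ball:
  assumes "inner_semicontinuous H xb pb y" "0 < \<delta>"
  obtains r t where "0 < r" "0 < t"
    "\<And>x p. x \<in> ball xb r \<Longrightarrow> p \<in> ball pb t \<Longrightarrow> H x p \<inter> ball y \<delta> \<noteq> {}"
proof -
  obtain U where U: "open U" "(xb, pb) \<in> U" "\<And>x p. (x, p) \<in> U \<Longrightarrow> H x p \<inter> ball y \<delta> \<noteq> {}"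
    using assms unfolding inner_semicontinuous_def by (meson centre_in_ball open_ball)
  obtain A B where "open A" "open B" "(xb, pb) \<in> A \<times> B" "A \<times> B \<subseteq> U"
    using open_prod_elim[OF U(1,2)] by blast
  moreover obtain r where "0 < r" "ball xb r \<subseteq> A"
    using \<open>open A\<close> \<open>(xb, pb) \<in> A \<times> B\<close> open_contains_ball by blast
  moreover obtain t where "0 < t" "ball pb t \<subseteq> B"
    using \<open>open B\<close> \<open>(xb, pb) \<in> A \<times> B\<close> open_contains_ball by blast
  ultimately show ?thesis
    using that U(3) by blast
qed

lemma inner_semicontinuous_swap:
  assumes "inner_semicontinuous H xb pb y"
  shows "inner_semicontinuous (\<lambda>p x. H x p) pb xb y"
  unfolding inner_semicontinuous_def
proof (intro allI impI)
  fix D assume "open D \<and> y \<in> D"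
  then obtain \<delta> where "0 < \<delta>" "ball y \<delta> \<subseteq> D"
    using open_contains_ball by blast
  moreover obtain r t where "0 < r" "0 < t"
    "\<And>x p. x \<in> ball xb r \<Longrightarrow> p \<in> ball pb t \<Longrightarrow> H x p \<inter> ball y \<delta> \<noteq> {}"
    using inner_semicontinuousD_ball[OF assms \<open>0 < \<delta>\<close>] by blast
  ultimately show "\<exists>U. open U \<and> (pb, xb) \<in> U \<and> (\<forall>p x. (p, x) \<in> U \<longrightarrow> H x p \<inter> D \<noteq> {})"
    by (intro exI[of _ "ball pb t \<times> ball xb r"]) (fastforce simp: open_Times)
qed

lemma open_rate_p_iff_swap:
  "open_rate_p H c xb pb y \<longleftrightarrow> open_rate_x (\<lambda>p x. H x p) c pb xb y"
  unfolding open_rate_x_def open_rate_p_def by blast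

lemma infdist_solutions_le_if_open_rate_x:
  fixes H :: "'x::real_normed_vector \<Rightarrow> 'p::real_normed_vector \<Rightarrow> 'y::real_normed_vector set"
  assumes "0 < c" and open_rate: "open_rate_x H c xb pb 0"
    and isc: "inner_semicontinuous H xb pb 0"
  obtains r t where "0 < r" "0 < t"
    "\<And>x p. x \<in> ball xb r \<Longrightarrow> p \<in> ball pb t \<Longrightarrow>
       {u. 0 \<in> H u p} \<noteq> {} \<and> infdist x {u. 0 \<in> H u p} \<le> infdist 0 (H x p) / c"
proof -
  obtain \<epsilon> U V W where "0 < \<epsilon>" "open U" "xb \<in> U" "open V" "pb \<in> V" "open W" "0 \<in> W"
    and opens: "\<And>\<rho> p x y. 0 < \<rho> \<Longrightarrow> \<rho> < \<epsilon> \<Longrightarrow> p \<in> V \<Longrightarrow> x \<in> U \<Longrightarrow> y \<in> W \<Longrightarrow> y \<in> H x p \<Longrightarrow>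
       ball y (\<rho> * c) \<subseteq> (\<Union>u\<in>ball x \<rho>. H u p)"
    using open_rate unfolding open_rate_x_def by metis
  obtain e where "0 < e" "ball 0 e \<subseteq> W"
    using \<open>open W\<close> \<open>0 \<in> W\<close> open_contains_ball by blast
  define a where "a = min e (c * \<epsilon>)"
  have "0 < a"
    using \<open>0 < e\<close> \<open>0 < c\<close> \<open>0 < \<epsilon>\<close> by (simp add: a_def)
  have reach: "{u. 0 \<in> H u p} \<noteq> {} \<and> infdist x {u. 0 \<in> H u p} < \<rho>"
    if "x \<in> U" "p \<in> V" "y \<in> H x p" "norm y < a" "0 < \<rho>" "\<rho> < \<epsilon>" "norm y < \<rho> * c" for x p y \<rho>
  proof -
    have "y \<in> W"
      using \<open>norm y < a\<close> \<open>ball 0 e \<subseteq> W\<close> by (auto simp: a_def)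
    moreover have "0 \<in> ball y (\<rho> * c)"
      using \<open>norm y < \<rho> * c\<close> by simp
    ultimately have "0 \<in> (\<Union>u\<in>ball x \<rho>. H u p)"
      using opens[of \<rho> p x y] that by blast
    then obtain u where "dist x u < \<rho>" "0 \<in> H u p"
      by auto
    then show ?thesis
      using infdist_le[of u "{u. 0 \<in> H u p}" x] by auto
  qed
  have bound: "{u. 0 \<in> H u p} \<noteq> {} \<and> infdist x {u. 0 \<in> H u p} \<le> norm y / c"
    if "x \<in> U" "p \<in> V" "y \<in> H x p" "norm y < a" for x p y
  proof -
    have small: "norm y / c < \<epsilon>"
      using \<open>norm y < a\<close> \<open>0 < c\<close> by (simp add: a_def divide_less_eq mult.commute)
    have near: "{u. 0 \<in> H u p} \<noteq> {} \<and> infdist x {u. 0 \<in> H u p} < w"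
      if "norm y / c < w" "w < \<epsilon>" for w
    proof (rule reach[OF \<open>x \<in> U\<close> \<open>p \<in> V\<close> \<open>y \<in> H x p\<close> \<open>norm y < a\<close> _ that(2)])
      have "0 \<le> norm y / c"
        using \<open>0 < c\<close> by simp
      then show "0 < w"
        using that(1) by linarith
      show "norm y < w * c"
        using that(1) \<open>0 < c\<close> by (simp add: divide_less_eq)
    qed
    obtain w where "norm y / c < w" "w < \<epsilon>"
      using dense[OF small] by blast
    then have "{u. 0 \<in> H u p} \<noteq> {}"
      using near by blast
    moreover have "infdist x {u. 0 \<in> H u p} \<le> norm y / c"
      using dense_ge_bounded[OF small] near by (meson less_imp_le)
    ultimately show ?thesis ..
  qed
  obtain r1 t1 where "0 < r1" "0 < t1"
    and small_values: "\<And>x p. x \<in> ball xb r1 \<Longrightarrow> p \<in> ball pb t1 \<Longrightarrow> H x p \<inter> ball 0 a \<noteq> {}"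
    using inner_semicontinuousD_ball[OF isc \<open>0 < a\<close>] by blast
  obtain r2 where "0 < r2" "ball xb r2 \<subseteq> U"
    using \<open>open U\<close> \<open>xb \<in> U\<close> open_contains_ball by blast
  obtain t2 where "0 < t2" "ball pb t2 \<subseteq> V"
    using \<open>open V\<close> \<open>pb \<in> V\<close> open_contains_ball by blast
  show ?thesis
  proof (rule that[of "min r1 r2" "min t1 t2"])
    fix x p assume "x \<in> ball xb (min r1 r2)" "p \<in> ball pb (min t1 t2)"
    then have "x \<in> U" "p \<in> V" "H x p \<inter> ball 0 a \<noteq> {}"
      using small_values \<open>ball xb r2 \<subseteq> U\<close> \<open>ball pb t2 \<subseteq> V\<close> by auto
    then obtain y0 where "y0 \<in> H x p" "norm y0 < a"
      by auto
    have "infdist 0 (H x p) < a"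
      using infdist_le[OF \<open>y0 \<in> H x p\<close>, of 0] \<open>norm y0 < a\<close> by simp
    then have "infdist x {u. 0 \<in> H u p} \<le> (1 / c) * infdist 0 (H x p)"
      using bound[OF \<open>x \<in> U\<close> \<open>p \<in> V\<close>] \<open>0 < c\<close> \<open>y0 \<in> H x p\<close>
      by (intro le_mult_infdist_if_le_nearby) auto
    then show "{u. 0 \<in> H u p} \<noteq> {} \<and> infdist x {u. 0 \<in> H u p} \<le> infdist 0 (H x p) / c"
      using bound[OF \<open>x \<in> U\<close> \<open>p \<in> V\<close> \<open>y0 \<in> H x p\<close> \<open>norm y0 < a\<close>] by simp
  qed (use \<open>0 < r1\<close> \<open>0 < r2\<close> \<open>0 < t1\<close> \<open>0 < t2\<close> in auto)
qed

lemma lipschitz_like_constI_infdist: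
  fixes T :: "'a::real_normed_vector \<Rightarrow> 'b::real_normed_vector set"
  assumes "0 \<le> L" "L < K" "open U" "ab \<in> U" "open V" "bb \<in> V"
    and dist_bound: "\<And>a u z. a \<in> U \<Longrightarrow> u \<in> U \<Longrightarrow> z \<in> T a \<inter> V \<Longrightarrow>
       T u \<noteq> {} \<and> infdist z (T u) \<le> L * norm (a - u)"
  shows "lipschitz_like_const T K ab bb"
proof -
  have enlarged: "z \<in> {z' + b | z' b. z' \<in> T u \<and> norm b \<le> K * norm (a - u)}"
    if "a \<in> U" "u \<in> U" "z \<in> T a \<inter> V" for a u z
  proof (cases "a = u")
    case True
    then show ?thesis
      using \<open>z \<in> T a \<inter> V\<close> by force
  next
    case False
    then have "L * norm (a - u) < K * norm (a - u)"
      using \<open>L < K\<close> by simp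
    then have "infdist z (T u) < K * norm (a - u)" "T u \<noteq> {}"
      using dist_bound[OF that] by auto
    then obtain z' where "z' \<in> T u" "dist z z' < K * norm (a - u)"
      using infdist_lessE by blast
    then show ?thesis
      by (intro CollectI exI[of _ z'] exI[of _ "z - z'"]) (simp add: dist_norm)
  qed
  have "0 \<le> K"
    using assms(1,2) by simp
  then show ?thesis
    unfolding lipschitz_like_const_def using assms(3-6) enlarged
    by (intro conjI exI[of _ U] exI[of _ V]) blast+
qed

lemma lipschitz_like_solution_map:
  fixes H :: "'x::real_normed_vector \<Rightarrow> 'p::real_normed_vector \<Rightarrow> 'y::real_normed_vector set"
  assumes "0 < c" "L / c < K" "0 < r" "0 < t"
    and estimate: "\<And>x p. x \<in> ball xb r \<Longrightarrow> p \<in> ball pb t \<Longrightarrow>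
       {u. 0 \<in> H u p} \<noteq> {} \<and> infdist x {u. 0 \<in> H u p} \<le> infdist 0 (H x p) / c"
    and lip_p: "lipschitz_like_p_const H L xb pb 0"
  shows "lipschitz_like_const (\<lambda>p. {u. 0 \<in> H u p}) K pb xb"
proof -
  obtain U V W where "0 \<le> L" "open U" "pb \<in> U" "open V" "xb \<in> V" "open W" "0 \<in> W"
    and shift: "\<forall>p q x. p \<in> U \<and> q \<in> U \<and> x \<in> V \<longrightarrow>
       H x p \<inter> W \<subseteq> {z + b | z b. z \<in> H x q \<and> norm b \<le> L * norm (p - q)}"
    using lip_p unfolding lipschitz_like_p_const_def by (elim exE conjE) blast
  show ?thesis
  proof (rule lipschitz_like_constI_infdist[where L = "L / c"])
    fix p q x
    assume p: "p \<in> U \<inter> ball pb t" and q: "q \<in> U \<inter> ball pb t"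
      and x: "x \<in> {u. 0 \<in> H u p} \<inter> (V \<inter> ball xb r)"
    then have "x \<in> ball xb r" "q \<in> ball pb t" "0 \<in> H x p \<inter> W"
      using \<open>0 \<in> W\<close> by auto
    have "H x q \<noteq> {} \<and> infdist 0 (H x q) \<le> L * norm (p - q)"
      using infdist_le_if_mem_enlargement[OF \<open>0 \<in> H x p \<inter> W\<close> shift[rule_format]] p q x
      by blast
    then have "infdist 0 (H x q) / c \<le> L / c * norm (p - q)"
      using \<open>0 < c\<close> by (simp add: divide_right_mono)
    then show "{u. 0 \<in> H u q} \<noteq> {} \<and> infdist x {u. 0 \<in> H u q} \<le> L / c * norm (p - q)"
      using estimate[OF \<open>x \<in> ball xb r\<close> \<open>q \<in> ball pb t\<close>] by linarith
  qed (use assms(1-4) \<open>0 \<le> L\<close> \<open>open U\<close> \<open>pb \<in> U\<close> \<open>open V\<close> \<open>xb \<in> V\<close> in \<open>simp_all add: open_Int\<close>)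
qed

lemma metric_regular_solution_map:
  fixes H :: "'x::real_normed_vector \<Rightarrow> 'p::real_normed_vector \<Rightarrow> 'y::real_normed_vector set"
  assumes "0 < c" "L / c \<le> K" "0 < K" "0 < r" "0 < t"
    and estimate: "\<And>x p. x \<in> ball xb r \<Longrightarrow> p \<in> ball pb t \<Longrightarrow>
       {q. 0 \<in> H x q} \<noteq> {} \<and> infdist p {q. 0 \<in> H x q} \<le> infdist 0 (H x p) / c"
    and isc: "inner_semicontinuous H xb pb 0"
    and lip_x: "lipschitz_like_x_const H L xb pb 0"
  shows "metric_regular_const (\<lambda>p. {u. 0 \<in> H u p}) K pb xb"
proof -
  obtain U V W where "0 \<le> L" "open U" "xb \<in> U" "open V" "pb \<in> V" "open W" "0 \<in> W"
    and shift: "\<forall>x u p. x \<in> U \<and> u \<in> U \<and> p \<in> V \<longrightarrow>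
       H x p \<inter> W \<subseteq> {z + b | z b. z \<in> H u p \<and> norm b \<le> L * norm (x - u)}"
    using lip_x unfolding lipschitz_like_x_const_def by (elim exE conjE) blast
  obtain a0 where "0 < a0" "ball xb a0 \<subseteq> U"
    using \<open>open U\<close> \<open>xb \<in> U\<close> open_contains_ball by blast
  define a where "a = min (a0 / 2) r"
  have "0 < a" "a \<le> r"
    using \<open>0 < a0\<close> \<open>0 < r\<close> by (auto simp: a_def)
  \<comment> \<open>If \<open>d(x, S p) \<ge> a\<close>, inner semicontinuity alone gives \<open>d(0, H x p) < c K a \<le> c K d(x, S p)\<close>;
    otherwise the nearby points of \<open>S p\<close> lie in \<open>U\<close>, where Lipschitz-likeness in \<open>x\<close> applies.\<close>
  have "0 < c * K * a"
    using \<open>0 < c\<close> \<open>0 < K\<close> \<open>0 < a\<close> by simp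
  then obtain r1 t1 where "0 < r1" "0 < t1"
    and small_values: "\<And>x p. x \<in> ball xb r1 \<Longrightarrow> p \<in> ball pb t1 \<Longrightarrow> H x p \<inter> ball 0 (c * K * a) \<noteq> {}"
    using inner_semicontinuousD_ball[OF isc] by blast
  obtain t2 where "0 < t2" "ball pb t2 \<subseteq> V"
    using \<open>open V\<close> \<open>pb \<in> V\<close> open_contains_ball by blast
  have regular: "dist_to_set p {q. 0 \<in> H x q} \<le> ereal K * dist_to_set x {u. 0 \<in> H u p}"
    if p: "p \<in> ball pb (min t (min t1 t2))" and x: "x \<in> ball xb (min a r1)" for p x
  proof (rule dist_to_set_le_ereal_mult)
    have "x \<in> ball xb r" "p \<in> ball pb t"
      using p x \<open>a \<le> r\<close> by auto
    note inverse_estimate = estimate[OF this]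
    then show "{q. 0 \<in> H x q} \<noteq> {}"
      by blast
    show "0 < K"
      by fact
    assume "{u. 0 \<in> H u p} \<noteq> {}"
    have "infdist 0 (H x p) / c \<le> K * infdist x {u. 0 \<in> H u p}"
    proof (cases "a \<le> infdist x {u. 0 \<in> H u p}")
      case True
      obtain y where "y \<in> H x p" "norm y < c * K * a"
        using small_values[of x p] p x by auto
      then have "infdist 0 (H x p) < c * K * a"
        using infdist_le[of y "H x p" 0] by simp
      then have "infdist 0 (H x p) / c < K * a"
        using \<open>0 < c\<close> by (simp add: divide_less_eq mult.commute mult.left_commute)
      also have "\<dots> \<le> K * infdist x {u. 0 \<in> H u p}"
        using True \<open>0 < K\<close> by simp
      finally show ?thesis
        by simp
    next
      case False
      show ?thesis
      proof (rule le_mult_infdist_if_le_nearby)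
        fix x' assume x': "x' \<in> {u. 0 \<in> H u p}" "dist x x' < a"
        have "dist xb x < a0 / 2" "dist x x' < a0 / 2"
          using x \<open>dist x x' < a\<close> by (auto simp: a_def)
        then have "x \<in> ball xb a0" "x' \<in> ball xb a0"
          unfolding mem_ball using dist_triangle[of xb x' x] zero_le_dist[of xb x] by linarith+
        then have "x \<in> U" "x' \<in> U"
          using \<open>ball xb a0 \<subseteq> U\<close> by auto
        moreover have "p \<in> V"
          using p \<open>ball pb t2 \<subseteq> V\<close> by auto
        moreover have "0 \<in> H x' p \<inter> W"
          using x' \<open>0 \<in> W\<close> by simp
        ultimately have "infdist 0 (H x p) \<le> L * dist x x'"
          using infdist_le_if_mem_enlargement[OF _ shift[rule_format]]
          by (metis dist_norm dist_commute)
        then have "infdist 0 (H x p) / c \<le> L / c * dist x x'"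
          using \<open>0 < c\<close> by (simp add: divide_right_mono)
        also have "\<dots> \<le> K * dist x x'"
          using mult_right_mono[OF \<open>L / c \<le> K\<close> zero_le_dist] by simp
        finally show "infdist 0 (H x p) / c \<le> K * dist x x'" .
      qed (use False \<open>{u. 0 \<in> H u p} \<noteq> {}\<close> \<open>0 < K\<close> in auto)
    qed
    then show "infdist p {q. 0 \<in> H x q} \<le> K * infdist x {u. 0 \<in> H u p}"
      using inverse_estimate by auto
  qed
  show ?thesis
    unfolding metric_regular_const_def
    using \<open>0 < K\<close> \<open>0 < a\<close> \<open>0 < r1\<close> \<open>0 < t\<close> \<open>0 < t1\<close> \<open>0 < t2\<close> regular
    by (intro conjI exI[of _ "ball pb (min t (min t1 t2))"] exI[of _ "ball xb (min a r1)"]) auto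
qed

lemma Inf_ereal_le_cmult_Inf:
  assumes "0 < c" and scaled: "\<And>L e. P L \<Longrightarrow> 0 < e \<Longrightarrow> Q (L / c + e)"
  shows "Inf {ereal L | L. Q L} \<le> ereal (1 / c) * Inf {ereal L | L. P L}"
proof -
  have "Inf {ereal L | L. Q L} \<le> Inf {ereal (1 / c) * x | x. \<exists>L. x = ereal L \<and> P L}"
  proof (rule Inf_greatest)
    fix z assume "z \<in> {ereal (1 / c) * x | x. \<exists>L. x = ereal L \<and> P L}"
    then obtain L where "P L" "z = ereal (L / c)"
      by auto
    have "Inf {ereal L | L. Q L} \<le> ereal (L / c)"
    proof (rule ereal_le_epsilon2)
      fix e :: real assume "0 < e"
      then have "Inf {ereal L | L. Q L} \<le> ereal (L / c + e)"
        using scaled[OF \<open>P L\<close>] by (intro Inf_lower) blast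
      then show "Inf {ereal L | L. Q L} \<le> ereal (L / c) + ereal e"
        by simp
    qed
    then show "Inf {ereal L | L. Q L} \<le> z"
      using \<open>z = ereal (L / c)\<close> by simp
  qed
  also have "\<dots> = ereal (1 / c) * Inf {ereal L | L. P L}"
    using ereal_Inf_cmult[of "1 / c" "\<lambda>x. \<exists>L. x = ereal L \<and> P L"] \<open>0 < c\<close> by simp
  finally show ?thesis .
qed

lemma solution_map_lipschitz_like_if_open_rate_x:
  fixes H :: "'x::real_normed_vector \<Rightarrow> 'p::real_normed_vector \<Rightarrow> 'y::real_normed_vector set"
  assumes "0 < c" "open_rate_x H c xb pb 0" "inner_semicontinuous H xb pb 0"
  shows "(\<exists>r>0. \<exists>t>0. \<forall>x p. x \<in> ball xb r \<and> p \<in> ball pb t \<longrightarrow>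
            dist_to_set x {u. 0 \<in> H u p} \<le> ereal (1 / c) * dist_to_set 0 (H x p))
    \<and> (lipschitz_like_p H xb pb 0 \<longrightarrow>
         lipschitz_like (\<lambda>p. {u. 0 \<in> H u p}) pb xb \<and>
         lip (\<lambda>p. {u. 0 \<in> H u p}) pb xb \<le> ereal (1 / c) * lip_hat_p H xb pb 0)"
proof (intro conjI impI)
  obtain r t where "0 < r" "0 < t" and estimate: "\<And>x p. x \<in> ball xb r \<Longrightarrow> p \<in> ball pb t \<Longrightarrow>
       {u. 0 \<in> H u p} \<noteq> {} \<and> infdist x {u. 0 \<in> H u p} \<le> infdist 0 (H x p) / c"
    using infdist_solutions_le_if_open_rate_x[OF assms] by blast
  have "dist_to_set x {u. 0 \<in> H u p} \<le> ereal (1 / c) * dist_to_set 0 (H x p)"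
    if "x \<in> ball xb r" "p \<in> ball pb t" for x p
    using estimate[OF that] \<open>0 < c\<close> by (intro dist_to_set_le_ereal_mult) auto
  then show "\<exists>r>0. \<exists>t>0. \<forall>x p. x \<in> ball xb r \<and> p \<in> ball pb t \<longrightarrow>
          dist_to_set x {u. 0 \<in> H u p} \<le> ereal (1 / c) * dist_to_set 0 (H x p)"
    using \<open>0 < r\<close> \<open>0 < t\<close> by blast
  have aubin: "lipschitz_like_const (\<lambda>p. {u. 0 \<in> H u p}) (L / c + e) pb xb"
    if "lipschitz_like_p_const H L xb pb 0" "0 < e" for L e
    using lipschitz_like_solution_map[OF \<open>0 < c\<close> _ \<open>0 < r\<close> \<open>0 < t\<close> estimate that(1)] that(2)
    by simp
  assume "lipschitz_like_p H xb pb 0"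
  then obtain L where L: "lipschitz_like_p_const H L xb pb 0"
    unfolding lipschitz_like_p_def ..
  show "lipschitz_like (\<lambda>p. {u. 0 \<in> H u p}) pb xb"
    using aubin[OF L zero_less_one] unfolding lipschitz_like_def by blast
  show "lip (\<lambda>p. {u. 0 \<in> H u p}) pb xb \<le> ereal (1 / c) * lip_hat_p H xb pb 0"
    unfolding lip_def lip_hat_p_def by (rule Inf_ereal_le_cmult_Inf[OF \<open>0 < c\<close>], rule aubin)
qed

lemma solution_map_metric_regular_if_open_rate_p:
  fixes H :: "'x::real_normed_vector \<Rightarrow> 'p::real_normed_vector \<Rightarrow> 'y::real_normed_vector set"
  assumes "0 < c" "open_rate_p H c xb pb 0" "inner_semicontinuous H xb pb 0"
  shows "(\<exists>r>0. \<exists>t>0. \<forall>x p. x \<in> ball xb r \<and> p \<in> ball pb t \<longrightarrow>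
            dist_to_set p {q. 0 \<in> H x q} \<le> ereal (1 / c) * dist_to_set 0 (H x p))
    \<and> (lipschitz_like_x H xb pb 0 \<longrightarrow>
         metric_regular (\<lambda>p. {u. 0 \<in> H u p}) pb xb \<and>
         reg (\<lambda>p. {u. 0 \<in> H u p}) pb xb \<le> ereal (1 / c) * lip_hat_x H xb pb 0)"
proof (intro conjI impI)
  obtain t r where "0 < t" "0 < r" and estimate: "\<And>p x. p \<in> ball pb t \<Longrightarrow> x \<in> ball xb r \<Longrightarrow>
       {q. 0 \<in> H x q} \<noteq> {} \<and> infdist p {q. 0 \<in> H x q} \<le> infdist 0 (H x p) / c"
    using infdist_solutions_le_if_open_rate_x[OF \<open>0 < c\<close>
        open_rate_p_iff_swap[THEN iffD1, OF assms(2)] inner_semicontinuous_swap[OF assms(3)]]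
    by blast
  have "dist_to_set p {q. 0 \<in> H x q} \<le> ereal (1 / c) * dist_to_set 0 (H x p)"
    if "x \<in> ball xb r" "p \<in> ball pb t" for x p
    using estimate[OF that(2,1)] \<open>0 < c\<close> by (intro dist_to_set_le_ereal_mult) auto
  then show "\<exists>r>0. \<exists>t>0. \<forall>x p. x \<in> ball xb r \<and> p \<in> ball pb t \<longrightarrow>
          dist_to_set p {q. 0 \<in> H x q} \<le> ereal (1 / c) * dist_to_set 0 (H x p)"
    using \<open>0 < r\<close> \<open>0 < t\<close> by blast
  have regular: "metric_regular_const (\<lambda>p. {u. 0 \<in> H u p}) (L / c + e) pb xb"
    if "lipschitz_like_x_const H L xb pb 0" "0 < e" for L e
  proof (rule metric_regular_solution_map[OF \<open>0 < c\<close> _ _ \<open>0 < r\<close> \<open>0 < t\<close> _ assms(3) that(1)])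
    show "L / c \<le> L / c + e"
      using \<open>0 < e\<close> by simp
    show "0 < L / c + e"
      using that \<open>0 < c\<close> unfolding lipschitz_like_x_const_def by (simp add: add_nonneg_pos)
    show "{q. 0 \<in> H x q} \<noteq> {} \<and> infdist p {q. 0 \<in> H x q} \<le> infdist 0 (H x p) / c"
      if "x \<in> ball xb r" "p \<in> ball pb t" for x p
      using estimate[OF that(2,1)] .
  qed
  assume "lipschitz_like_x H xb pb 0"
  then obtain L where L: "lipschitz_like_x_const H L xb pb 0"
    unfolding lipschitz_like_x_def ..
  show "metric_regular (\<lambda>p. {u. 0 \<in> H u p}) pb xb"
    using regular[OF L zero_less_one] unfolding metric_regular_def by blast
  show "reg (\<lambda>p. {u. 0 \<in> H u p}) pb xb \<le> ereal (1 / c) * lip_hat_x H xb pb 0"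
    unfolding reg_def lip_hat_x_def by (rule Inf_ereal_le_cmult_Inf[OF \<open>0 < c\<close>], rule regular)
qed

theorem theorem3p6:
  fixes H :: "'x::banach \<Rightarrow> 'p::banach \<Rightarrow> 'y::banach set"
    and S :: "'p \<Rightarrow> 'x set"
    and xb :: 'x and pb :: 'p
  assumes graph: "0 \<in> H xb pb"
    and S_def: "\<And>p. S p = {x. 0 \<in> H x p}"
    and isc: "inner_semicontinuous H xb pb 0"
  shows
    "(\<forall>c>0. open_rate_x H c xb pb 0 \<longrightarrow>
        (\<exists>r>0. \<exists>t>0. \<forall>x p. x \<in> ball xb r \<and> p \<in> ball pb t \<longrightarrow>
            dist_to_set x (S p) \<le> ereal (1 / c) * dist_to_set 0 (H x p))
      \<and> (lipschitz_like_p H xb pb 0 \<longrightarrow>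
            lipschitz_like S pb xb \<and> lip S pb xb \<le> ereal (1 / c) * lip_hat_p H xb pb 0))
   \<and> (\<forall>c>0. open_rate_p H c xb pb 0 \<longrightarrow>
        (\<exists>r>0. \<exists>t>0. \<forall>x p. x \<in> ball xb r \<and> p \<in> ball pb t \<longrightarrow>
            dist_to_set p {q. x \<in> S q} \<le> ereal (1 / c) * dist_to_set 0 (H x p))
      \<and> (lipschitz_like_x H xb pb 0 \<longrightarrow>
            metric_regular S pb xb \<and> reg S pb xb \<le> ereal (1 / c) * lip_hat_x H xb pb 0))"
proof -
  have "S = (\<lambda>p. {u. 0 \<in> H u p})"
    using S_def by blast
  then show ?thesis
    by (simp add: solution_map_lipschitz_like_if_open_rate_x[OF _ _ isc]
        solution_map_metric_regular_if_open_rate_p[OF _ _ isc] del: mem_ball)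
qed

end
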